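(* For each positive integer $n$, \[ 1 + \sum_{k=1}^{n} (-q)^k \left( \overline{{ n \brack k }}_{q,1} + \overline{{ n-1 \brack k-1 }}_{q,1} \right) = \sum_{ |j| \le \lfloor ( n+1 )/2 \rfloor } (-1)^j q^{j^2}. \]
   Context: An overpartition is a partition in which the last occurrence of each distinct part size may be overlined; its weight $|\lambda|$ is the sum of its parts. For integers $0\le k\le n$, $\overline{{n \brack k}}_{q,1}=\sum_{\lambda} q^{|\lambda|}$, the sum over all overpartitions $\lambda$ with largest part at most $n-k$ and at most $k$ parts. *)

theory Defs
  imports Main "HOL-Library.Multiset"
begin

text \<open>An overpartition is represented as a pair (P, S): P is the multiset of parts
(positive integers), O is the set of part sizes whose last occurrence is overlined
(so O is a subset of the distinct parts).\<close>

definition overpartitions_bounded :: "nat \<Rightarrow> nat \<Rightarrow> (nat multiset \<times> nat set) set" where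
  "overpartitions_bounded m k =
     {(P, S). set_mset P \<subseteq> {1..m} \<and> size P \<le> k \<and> S \<subseteq> set_mset P}"

definition over_qbinom :: "nat \<Rightarrow> nat \<Rightarrow> 'a::comm_ring_1 \<Rightarrow> 'a" where
  "over_qbinom n k q =
     (\<Sum>(P, S) \<in> overpartitions_bounded (n - k) k. q ^ (sum_mset P))"

end

theory Submission
  imports Defs
begin

(*
  Let G(m,k) be the generating function of overpartitions with parts at most m and at most
  k parts, so that the overpartition q-binomial [n,k] is G(n-k,k). Sorting by the largest
  allowed part a = m+1 (absent; present once and overlined; otherwise) gives
    G(m+1,k+1) = G(m,k+1) + q^(m+1) (G(m,k) + G(m+1,k)),
  and the conjugate recurrence in k follows from it algebraically. For the antidiagonal sums
  W_z(N) = sum_k z^k G(N-k,k) the two recurrences become linear relations between W_z and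
  W_(qz). The left-hand side of the theorem equals L(n) = W_(-1)(n+1) + W_(-1)(n), and
  eliminating W_(-q) gives L(n+3) = L(n+2) - q^(n+3) (L(n+1) - L(n)). The partial theta
  sums over |j| <= (n+1) div 2 satisfy the same recurrence and initial values.
*)

definition over_box :: "'a::comm_ring_1 \<Rightarrow> nat \<Rightarrow> nat \<Rightarrow> 'a" where
  "over_box q m k = (\<Sum>(P, S) \<in> overpartitions_bounded m k. q ^ sum_mset P)"

lemma over_qbinom_eq_over_box: "over_qbinom n k q = over_box q (n - k) k"
  by (simp add: over_qbinom_def over_box_def)

lemma overpartitions_bounded_0:
  assumes "m = 0 \<or> k = 0"
  shows "overpartitions_bounded m k = {({#}, {})}"
  using assms by (auto simp: overpartitions_bounded_def)

lemma over_box_0_left [simp]: "over_box q 0 k = 1"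
  and over_box_0_right [simp]: "over_box q m 0 = 1"
  by (simp_all add: over_box_def overpartitions_bounded_0)

lemma finite_overpartitions_bounded: "finite (overpartitions_bounded m k)"
proof (rule finite_subset)
  show "overpartitions_bounded m k \<subseteq> (\<Union>i\<le>k. multisets_of_size {1..m} i) \<times> Pow {1..m}"
    by (auto simp: overpartitions_bounded_def multisets_of_size_def)
qed auto

lemma overpartitions_bounded_without_Suc:
  "{(P, S) \<in> overpartitions_bounded (Suc m) k. Suc m \<notin># P} = overpartitions_bounded m k"
  by (auto simp: overpartitions_bounded_def subset_iff le_Suc_eq)

lemma image_add_overlined_part:
  "(\<lambda>(P, S). (add_mset (Suc m) P, insert (Suc m) S)) ` overpartitions_bounded m k
   = {(P, S) \<in> overpartitions_bounded (Suc m) (Suc k). Suc m \<in> S \<and> count P (Suc m) = 1}"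
  (is "?f ` _ = _")
proof (intro equalityI subsetI)
  fix x assume "x \<in> {(P, S) \<in> overpartitions_bounded (Suc m) (Suc k). Suc m \<in> S \<and> count P (Suc m) = 1}"
  then obtain P S where x: "x = (P, S)" "(P, S) \<in> overpartitions_bounded (Suc m) (Suc k)"
     "Suc m \<in> S" "count P (Suc m) = 1"
    by auto
  have "Suc m \<in># P"
    by (rule count_inI) (simp add: x(4))
  then obtain P0 where P0: "P = add_mset (Suc m) P0"
    by (blast dest: multi_member_split)
  with x(4) have "Suc m \<notin># P0"
    by (simp add: not_in_iff)
  then have "(P0, S - {Suc m}) \<in> overpartitions_bounded m k"
    using x(2) unfolding P0 by (auto simp: overpartitions_bounded_def subset_iff le_Suc_eq)
  moreover have "x = ?f (P0, S - {Suc m})"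
    using x(1,3) P0 by auto
  ultimately show "x \<in> ?f ` overpartitions_bounded m k" by blast
qed (auto simp: overpartitions_bounded_def not_in_iff[symmetric])

lemma image_add_part:
  "(\<lambda>(P, S). (add_mset (Suc m) P, S)) ` overpartitions_bounded (Suc m) k
   = {(P, S) \<in> overpartitions_bounded (Suc m) (Suc k).
        Suc m \<in># P \<and> \<not> (Suc m \<in> S \<and> count P (Suc m) = 1)}"
  (is "?f ` _ = _")
proof (intro equalityI subsetI)
  fix x assume "x \<in> {(P, S) \<in> overpartitions_bounded (Suc m) (Suc k).
        Suc m \<in># P \<and> \<not> (Suc m \<in> S \<and> count P (Suc m) = 1)}"
  then obtain P S where x: "x = (add_mset (Suc m) P, S)"
      "(add_mset (Suc m) P, S) \<in> overpartitions_bounded (Suc m) (Suc k)"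
      "Suc m \<in> S \<longrightarrow> Suc m \<in># P"
    by (auto dest!: multi_member_split)
  then have "(P, S) \<in> overpartitions_bounded (Suc m) k"
    by (auto simp: overpartitions_bounded_def subset_iff)
  then show "x \<in> ?f ` overpartitions_bounded (Suc m) k"
    using x(1) by auto
qed (auto simp: overpartitions_bounded_def not_in_iff[symmetric])

lemma over_box_Suc_Suc:
  "over_box q (Suc m) (Suc k) = over_box q m (Suc k) + q ^ Suc m * (over_box q m k + over_box q (Suc m) k)"
proof -
  define w :: "nat multiset \<times> nat set \<Rightarrow> 'a" where "w = (\<lambda>(P, S). q ^ sum_mset P)"
  define a where "a = Suc m"
  let ?X = "overpartitions_bounded a (Suc k)"
  let ?A = "{(P, S) \<in> ?X. a \<notin># P}"
  let ?B = "{(P, S) \<in> ?X. a \<in> S \<and> count P a = 1}"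
  let ?C = "{(P, S) \<in> ?X. a \<in># P \<and> \<not> (a \<in> S \<and> count P a = 1)}"
  have fin: "finite ?A" "finite ?B" "finite ?C"
    by (rule finite_subset[OF _ finite_overpartitions_bounded], blast)+
  have "sum w ?X = sum w ((?A \<union> ?B) \<union> ?C)"
    by (rule arg_cong[where f = "sum w"]) (auto simp: count_inI)
  also have "\<dots> = sum w ?A + sum w ?B + sum w ?C"
    using fin by (simp add: sum.union_disjoint disjoint_iff not_in_iff)
  also have "sum w ?A = over_box q m (Suc k)"
    unfolding a_def overpartitions_bounded_without_Suc by (simp add: over_box_def w_def)
  also have "sum w ?B = q ^ a * over_box q m k"
  proof -
    have "a \<notin> S" if "(P, S) \<in> overpartitions_bounded m k" for P S
      using that by (auto simp: overpartitions_bounded_def a_def)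
    then have "inj_on (\<lambda>(P, S). (add_mset a P, insert a S)) (overpartitions_bounded m k)"
      by (auto simp: inj_on_def insert_ident)
    then show ?thesis
      unfolding a_def image_add_overlined_part[symmetric]
      by (simp add: sum.reindex over_box_def w_def sum_distrib_left case_prod_unfold power_add mult.assoc)
  qed
  also have "sum w ?C = q ^ a * over_box q a k"
  proof -
    have "inj_on (\<lambda>(P, S). (add_mset a P, S)) (overpartitions_bounded a k)"
      by (auto simp: inj_on_def)
    then show ?thesis
      unfolding a_def image_add_part[symmetric]
      by (simp add: sum.reindex over_box_def w_def sum_distrib_left case_prod_unfold power_add mult.assoc)
  qed
  finally show ?thesis
    by (simp add: over_box_def w_def a_def algebra_simps)
qed

text \<open>The defect D below satisfies the recurrence of over_box_Suc_Suc and vanishes on the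
  boundary, hence everywhere.\<close>

lemma over_box_Suc_Suc_conj:
  "over_box q (Suc m) (Suc k) = over_box q (Suc m) k + q ^ Suc k * (over_box q m (Suc k) + over_box q m k)"
proof -
  define D where "D m k = over_box q (Suc m) (Suc k) - over_box q (Suc m) k
      - q ^ Suc k * (over_box q m (Suc k) + over_box q m k)" for m k
  have step: "D (Suc m) (Suc k) = D m (Suc k) + q ^ Suc (Suc m) * (D (Suc m) k + D m k)" for m k
    unfolding D_def by (simp add: over_box_Suc_Suc algebra_simps)
  have "D (Suc m) 0 = D m 0" for m
    unfolding D_def by (simp add: over_box_Suc_Suc algebra_simps)
  moreover have "D 0 0 = 0"
    by (simp add: D_def over_box_Suc_Suc)
  ultimately have left: "D m 0 = 0" for m
    by (induction m) simp_all
  have "D 0 (Suc k) = q * D 0 k" for k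
    unfolding D_def by (simp add: over_box_Suc_Suc algebra_simps)
  with \<open>D 0 0 = 0\<close> have bottom: "D 0 k = 0" for k
    by (induction k) simp_all
  have "D m k = 0"
  proof (induction m arbitrary: k)
    case (Suc m)
    then show ?case
      by (induction k) (simp_all add: step left)
  qed (rule bottom)
  then show ?thesis
    by (simp add: D_def diff_eq_eq add.commute)
qed

definition over_box_antidiagonal :: "'a::comm_ring_1 \<Rightarrow> 'a \<Rightarrow> nat \<Rightarrow> 'a" where
  "over_box_antidiagonal q z N = (\<Sum>k\<le>N. z ^ k * over_box q (N - k) k)"

lemma over_box_antidiagonal_Suc_Suc_conj:
  "over_box_antidiagonal q z (Suc (Suc N)) =
     z * over_box_antidiagonal q z (Suc N) + over_box_antidiagonal q (q * z) (Suc N)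
     + q * z * over_box_antidiagonal q (q * z) N"
proof -
  let ?W = "over_box_antidiagonal q" and ?G = "over_box q"
  have "?W z (Suc (Suc N)) = 1 + (\<Sum>j\<le>N. z ^ Suc j * ?G (Suc N - j) (Suc j)) + z ^ Suc (Suc N)"
    unfolding over_box_antidiagonal_def by (subst sum.atMost_Suc_shift) simp
  also have "(\<Sum>j\<le>N. z ^ Suc j * ?G (Suc N - j) (Suc j))
      = z * (\<Sum>j\<le>N. z ^ j * ?G (Suc N - j) j) + (\<Sum>j\<le>N. (q * z) ^ Suc j * ?G (N - j) (Suc j))
        + q * z * (\<Sum>j\<le>N. (q * z) ^ j * ?G (N - j) j)"
    unfolding sum_distrib_left sum.distrib[symmetric]
    by (rule sum.cong) (auto simp: Suc_diff_le over_box_Suc_Suc_conj algebra_simps)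
  also have "(\<Sum>j\<le>N. z ^ j * ?G (Suc N - j) j) = ?W z (Suc N) - z ^ Suc N"
    by (simp add: over_box_antidiagonal_def)
  also have "(\<Sum>j\<le>N. (q * z) ^ Suc j * ?G (N - j) (Suc j)) = ?W (q * z) (Suc N) - 1"
    unfolding over_box_antidiagonal_def by (subst sum.atMost_Suc_shift) simp
  finally show ?thesis
    by (simp add: over_box_antidiagonal_def algebra_simps)
qed

lemma over_box_antidiagonal_Suc_Suc:
  "over_box_antidiagonal q (q * w) (Suc (Suc N)) =
     over_box_antidiagonal q (q * w) (Suc N)
     + q ^ Suc (Suc N) * w * (over_box_antidiagonal q w (Suc N) + over_box_antidiagonal q w N)"
proof -
  let ?W = "over_box_antidiagonal q" and ?G = "over_box q"
  have "?W (q * w) (Suc (Suc N)) = 1 + (\<Sum>j\<le>N. (q * w) ^ Suc j * ?G (Suc N - j) (Suc j)) + (q * w) ^ Suc (Suc N)"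
    unfolding over_box_antidiagonal_def by (subst sum.atMost_Suc_shift) simp
  also have "(\<Sum>j\<le>N. (q * w) ^ Suc j * ?G (Suc N - j) (Suc j))
      = (\<Sum>j\<le>N. (q * w) ^ Suc j * ?G (N - j) (Suc j))
        + q ^ Suc (Suc N) * w * (\<Sum>j\<le>N. w ^ j * ?G (Suc N - j) j)
        + q ^ Suc (Suc N) * w * (\<Sum>j\<le>N. w ^ j * ?G (N - j) j)"
  proof (unfold sum_distrib_left sum.distrib[symmetric], rule sum.cong)
    fix j assume "j \<in> {..N}"
    then have j: "Suc N - j = Suc (N - j)" "q ^ j * q ^ Suc (N - j) = q ^ Suc N"
      by (simp, subst power_add[symmetric], simp)
    have "(q * w) ^ Suc j * ?G (Suc (N - j)) (Suc j)
        = (q * w) ^ Suc j * ?G (N - j) (Suc j)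
          + q * w * w ^ j * (q ^ j * q ^ Suc (N - j)) * (?G (Suc (N - j)) j + ?G (N - j) j)"
      by (simp add: over_box_Suc_Suc algebra_simps)
    then show "(q * w) ^ Suc j * ?G (Suc N - j) (Suc j)
        = (q * w) ^ Suc j * ?G (N - j) (Suc j)
          + q ^ Suc (Suc N) * w * (w ^ j * ?G (Suc N - j) j)
          + q ^ Suc (Suc N) * w * (w ^ j * ?G (N - j) j)"
      unfolding j by (simp add: algebra_simps)
  qed simp
  also have "(\<Sum>j\<le>N. w ^ j * ?G (Suc N - j) j) = ?W w (Suc N) - w ^ Suc N"
    by (simp add: over_box_antidiagonal_def)
  also have "(\<Sum>j\<le>N. (q * w) ^ Suc j * ?G (N - j) (Suc j)) = ?W (q * w) (Suc N) - 1"
    unfolding over_box_antidiagonal_def by (subst sum.atMost_Suc_shift) simp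
  finally show ?thesis
    by (simp add: over_box_antidiagonal_def algebra_simps)
qed

lemma one_plus_sum_over_box_eq_antidiagonal:
  "1 + (\<Sum>k=1..n. (q * z) ^ k * (over_box q (n - k) k + over_box q (n - k) (k - 1)))
   = over_box_antidiagonal q z (Suc n) - z * over_box_antidiagonal q z n"
proof (cases n)
  case 0
  then show ?thesis by (simp add: over_box_antidiagonal_def)
next
  case (Suc p)
  let ?W = "over_box_antidiagonal q z" and ?G = "over_box q"
  have "(\<Sum>k=1..n. (q * z) ^ k * (?G (n - k) k + ?G (n - k) (k - 1)))
      = (\<Sum>j\<le>p. (q * z) ^ Suc j * (?G (p - j) (Suc j) + ?G (p - j) j))"
    unfolding Suc One_nat_def sum.shift_bounds_cl_Suc_ivl by (simp add: atLeast0AtMost)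
  also have "\<dots> = (\<Sum>j\<le>p. z ^ Suc j * ?G (Suc p - j) (Suc j)) - z * (\<Sum>j\<le>p. z ^ j * ?G (Suc p - j) j)"
    unfolding sum_distrib_left sum_subtractf[symmetric]
    by (rule sum.cong) (auto simp: Suc_diff_le over_box_Suc_Suc_conj algebra_simps)
  also have "(\<Sum>j\<le>p. z ^ Suc j * ?G (Suc p - j) (Suc j)) = ?W (Suc n) - 1 - z ^ Suc n"
    unfolding Suc over_box_antidiagonal_def by (subst sum.atMost_Suc_shift) simp
  also have "(\<Sum>j\<le>p. z ^ j * ?G (Suc p - j) j) = ?W n - z ^ n"
    unfolding Suc over_box_antidiagonal_def by simp
  finally show ?thesis
    by (simp add: algebra_simps)
qed

definition over_box_alt_sum :: "'a::comm_ring_1 \<Rightarrow> nat \<Rightarrow> 'a" where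
  "over_box_alt_sum q n = over_box_antidiagonal q (-1) (Suc n) + over_box_antidiagonal q (-1) n"

lemma over_box_alt_sum_Suc_Suc_Suc:
  "over_box_alt_sum q (Suc (Suc (Suc N))) =
     over_box_alt_sum q (Suc (Suc N)) - q ^ Suc (Suc (Suc N)) * (over_box_alt_sum q (Suc N) - over_box_alt_sum q N)"
proof -
  let ?V = "over_box_antidiagonal q (- q)"
  have A: "over_box_alt_sum q (Suc M) = ?V (Suc M) - q * ?V M" for M
    using over_box_antidiagonal_Suc_Suc_conj[of q "-1" M] by (simp add: over_box_alt_sum_def)
  have V: "?V (Suc (Suc M)) = ?V (Suc M) - q ^ Suc (Suc M) * over_box_alt_sum q M" for M
    using over_box_antidiagonal_Suc_Suc[of q "-1" M] by (simp add: over_box_alt_sum_def)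
  show ?thesis
    unfolding A V by (simp add: algebra_simps)
qed

definition theta_partial :: "'a::comm_ring_1 \<Rightarrow> nat \<Rightarrow> 'a" where
  "theta_partial q t = (\<Sum>j\<in>{-int t..int t}. (-1) ^ nat \<bar>j\<bar> * q ^ nat (j\<^sup>2))"

lemma theta_partial_0 [simp]: "theta_partial q 0 = 1"
  by (simp add: theta_partial_def)

lemma theta_partial_Suc:
  "theta_partial q (Suc t) = theta_partial q t + 2 * (-1) ^ Suc t * q ^ (Suc t)\<^sup>2"
proof -
  have "{-int (Suc t)..int (Suc t)} = insert (- int (Suc t)) (insert (int (Suc t)) {-int t..int t})"
    by auto
  moreover have "nat ((- int (Suc t))\<^sup>2) = (Suc t)\<^sup>2" "nat ((int (Suc t))\<^sup>2) = (Suc t)\<^sup>2"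
    by (simp_all only: power2_minus of_nat_power[symmetric] nat_int)
  ultimately show ?thesis
    by (simp add: theta_partial_def del: of_nat_Suc)
qed

lemma over_box_alt_sum_eq_theta_partial:
  "over_box_alt_sum q n = theta_partial q ((n + 1) div 2)"
proof (induction n rule: less_induct)
  case (less n)
  show ?case
  proof (cases "n < 3")
    case True
    then consider "n = 0" | "n = 1" | "n = 2"
      by linarith
    moreover have "over_box_alt_sum q 0 = 1" "over_box_alt_sum q 1 = 1 - 2 * q"
      "over_box_alt_sum q 2 = 1 - 2 * q"
      by (simp_all add: over_box_alt_sum_def over_box_antidiagonal_def over_box_Suc_Suc
          eval_nat_numeral algebra_simps)
    moreover have "theta_partial q 1 = 1 - 2 * q"
      using theta_partial_Suc[of q 0] by simp
    ultimately show ?thesis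
      by cases simp_all
  next
    case False
    define N where "N = n - 3"
    with False have n: "n = Suc (Suc (Suc N))"
      by simp
    have IH: "over_box_alt_sum q M = theta_partial q ((M + 1) div 2)" if "M < n" for M
      using less that by blast
    consider (even) s where "N = 2 * s" | (odd) s where "N = 2 * s + 1"
      by (metis evenE oddE)
    then show ?thesis
    proof cases
      case even
      let ?T = "theta_partial q"
      have IHs: "over_box_alt_sum q N = ?T s" "over_box_alt_sum q (Suc N) = ?T (Suc s)"
          "over_box_alt_sum q (Suc (Suc N)) = ?T (Suc s)"
        using IH[of N] IH[of "Suc N"] IH[of "Suc (Suc N)"] by (simp_all add: n even)
      have "(Suc s)\<^sup>2 + Suc (Suc (Suc N)) = (Suc (Suc s))\<^sup>2"
        by (simp add: even power2_eq_square)
      then have pow: "q ^ Suc (Suc (Suc N)) * q ^ (Suc s)\<^sup>2 = q ^ (Suc (Suc s))\<^sup>2"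
        by (metis power_add mult.commute)
      have "over_box_alt_sum q n = ?T (Suc s) - q ^ Suc (Suc (Suc N)) * (?T (Suc s) - ?T s)"
        using over_box_alt_sum_Suc_Suc_Suc[of q N] by (simp add: n IHs)
      also have "?T (Suc s) - ?T s = 2 * (-1) ^ Suc s * q ^ (Suc s)\<^sup>2"
        by (simp add: theta_partial_Suc)
      also have "?T (Suc s) - q ^ Suc (Suc (Suc N)) * (2 * (-1) ^ Suc s * q ^ (Suc s)\<^sup>2)
          = ?T (Suc s) + 2 * (-1) ^ Suc (Suc s) * (q ^ Suc (Suc (Suc N)) * q ^ (Suc s)\<^sup>2)"
        by (simp add: algebra_simps)
      also have "\<dots> = ?T (Suc (Suc s))"
        by (simp only: pow theta_partial_Suc[of q "Suc s"])
      finally show ?thesis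
        by (simp add: n even)
    next
      case odd
      then show ?thesis
        using over_box_alt_sum_Suc_Suc_Suc[of q N] IH[of N] IH[of "Suc N"] IH[of "Suc (Suc N)"]
        by (simp add: n)
    qed
  qed
qed

theorem corollary1p4:
  fixes n :: nat and q :: "'a::comm_ring_1"
  assumes "n \<ge> 1"
  shows "1 + (\<Sum>k=1..n. (-q)^k * (over_qbinom n k q + over_qbinom (n-1) (k-1) q))
       = (\<Sum>j\<in>{-(int ((n+1) div 2))..int ((n+1) div 2)}. (-1)^(nat \<bar>j\<bar>) * q^(nat (j^2)))"
proof -
  have "1 + (\<Sum>k=1..n. (-q)^k * (over_qbinom n k q + over_qbinom (n-1) (k-1) q))
      = 1 + (\<Sum>k=1..n. (q * -1) ^ k * (over_box q (n - k) k + over_box q (n - k) (k - 1)))"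
    by (simp add: over_qbinom_eq_over_box)
  also have "\<dots> = over_box_alt_sum q n"
    by (simp only: one_plus_sum_over_box_eq_antidiagonal over_box_alt_sum_def) simp
  also have "\<dots> = theta_partial q ((n + 1) div 2)"
    by (rule over_box_alt_sum_eq_theta_partial)
  finally show ?thesis
    by (simp add: theta_partial_def)
qed
end
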